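(* Let $n\ge3$, let $e_1,\dots,e_n\ge1$ be integers with $E=e_1e_2\cdots e_n\ge2$, let $c=\max\{e_1,\dots,e_n\}$, and let $R$ be a commutative unital ring in which $c!$ is invertible. Then for all distinct $i,j\in\{1,\dots,n\}$, all integers $m\ge0$ and all $r\in R$, the group $G_{R,n;e_1,\dots,e_n}$ contains $\alpha_{i;j}^{(t)}(r)$ where $t=t_{i,j}+m(E-1)$ and $t_{i,j}=e_ie_{i+1}\cdots e_{j-1}$ (indices ordered cyclically and taken modulo $n$). Consequently, for every polynomial $P\in R[y]$ and distinct $i,j$, $G_{R,n;e_1,\dots,e_n}$ contains the automorphism with $x_i\mapsto x_i+x_j^{t_{i,j}}P(x_j^{E-1})$ and $x_\ell\mapsto x_\ell$ for $\ell\ne i$.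
   Context: For distinct $i,j$, $e\ge0$, $r\in R$: $\alpha_{i;j}^{(e)}(r)\in\mathrm{Aut}(R[x_1,\dots,x_n])$ maps $x_i\mapsto x_i+rx_j^e$ and fixes $x_\ell$ for $\ell\ne i$. $G_{R,n;e_1,\dots,e_n}$ is the subgroup generated by $\{\alpha_{i;i+1}^{(e_i)}(r): 1\le i\le n, r\in R\}$, indices modulo $n$. The product $t_{i,j}$ runs cyclically from $e_i$ to $e_{j-1}$, e.g. $t_{i,i+1}=e_i$ and $t_{n,2}=e_ne_1$. *)

theory Defs
  imports "HOL-Library.Poly_Mapping" "HOL-Computational_Algebra.Polynomial"
begin

text \<open>Multivariate polynomials over R in variables indexed by nat (we use x_1,...,x_n),
  represented as finitely supported maps from monomials (exponent vectors) to coefficients.\<close>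
type_synonym 'a mpoly = "(nat \<Rightarrow>\<^sub>0 nat) \<Rightarrow>\<^sub>0 'a"

definition mconst :: "'a::comm_ring_1 \<Rightarrow> 'a mpoly" where
  "mconst c = Poly_Mapping.single 0 c"

definition mvar :: "nat \<Rightarrow> 'a::comm_ring_1 mpoly" where
  "mvar i = Poly_Mapping.single (Poly_Mapping.single i 1) 1"

definition msubst :: "(nat \<Rightarrow> 'a::comm_ring_1 mpoly) \<Rightarrow> 'a mpoly \<Rightarrow> 'a mpoly" where
  "msubst s p = (\<Sum>m\<in>Poly_Mapping.keys p. mconst (Poly_Mapping.lookup p m) * (\<Prod>l\<in>Poly_Mapping.keys m. s l ^ Poly_Mapping.lookup m l))"

definition elem_map :: "nat \<Rightarrow> 'a::comm_ring_1 mpoly \<Rightarrow> 'a mpoly \<Rightarrow> 'a mpoly" where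
  "elem_map i f = msubst (\<lambda>l. if l = i then mvar i + f else mvar l)"

definition alpha :: "nat \<Rightarrow> nat \<Rightarrow> nat \<Rightarrow> 'a::comm_ring_1 \<Rightarrow> 'a mpoly \<Rightarrow> 'a mpoly" where
  "alpha i j e r = elem_map i (mconst r * mvar j ^ e)"

definition cyc_succ :: "nat \<Rightarrow> nat \<Rightarrow> nat" where
  "cyc_succ n i = (if i = n then 1 else i + 1)"

definition cyc_add :: "nat \<Rightarrow> nat \<Rightarrow> nat \<Rightarrow> nat" where
  "cyc_add n i k = ((i - 1 + k) mod n) + 1"

definition t_prod :: "nat \<Rightarrow> (nat \<Rightarrow> nat) \<Rightarrow> nat \<Rightarrow> nat \<Rightarrow> nat" where
  "t_prod n e i j = (\<Prod>k<((j + n - i) mod n). e (cyc_add n i k))"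

text \<open>G_{R,n;e_1..e_n}: subgroup of Aut(R[x]) generated by the alpha_{i;i+1}^{(e_i)}(r).
  Since the inverse of alpha_{i;i+1}^{(e_i)}(r) is alpha_{i;i+1}^{(e_i)}(-r), the generated
  subgroup is the closure of the identity under left composition with generators.\<close>
inductive_set Ggrp :: "nat \<Rightarrow> (nat \<Rightarrow> nat) \<Rightarrow> ('a::comm_ring_1 mpoly \<Rightarrow> 'a mpoly) set"
  for n :: nat and e :: "nat \<Rightarrow> nat" where
  Ggrp_id: "id \<in> Ggrp n e"
| Ggrp_step: "\<lbrakk>f \<in> Ggrp n e; i \<in> {1..n}\<rbrakk> \<Longrightarrow> alpha i (cyc_succ n i) (e i) r \<circ> f \<in> Ggrp n e"

end

theory Submission
  imports Defs
begin

text \<open>Conjugating x_i \<mapsto> x_i + r Z x_k^d by x_k \<mapsto> x_k + s Y (with Z, Y free of x_i and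
  x_k) gives x_i \<mapsto> x_i + r Z (x_k + s Y)^d, a polynomial in s. Since d! is invertible,
  alternating sums over s = 0, ..., d (finite differences) isolate each coefficient, so every
  x_i \<mapsto> x_i + r Z Y^l x_k^(d-l) lies in the group. Taking l = 1 and then l = d - 1 with Y a
  power of x_j trades the generator's x_(i+1)^(e_i) for a power of x_j; walking backwards along
  the cycle from j - 1 to i produces the exponent t_(i,j), and one extra lap around the whole
  cycle adds E - 1. Induction on m gives all exponents t_(i,j) + m (E - 1), and the polynomial
  version follows because maps in the same direction i compose by adding their increments.\<close>

lemma mconst_0 [simp]: "mconst 0 = 0"
  by (simp add: mconst_def)

lemma mconst_1 [simp]: "mconst 1 = 1"
  by (simp add: mconst_def)

lemma mconst_add: "mconst (a + b) = mconst a + mconst b"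
  by (simp add: mconst_def single_add)

lemma mconst_mult: "mconst (a * b) = mconst a * mconst b"
  by (simp add: mconst_def mult_single)

lemma mconst_uminus: "mconst (- a) = - mconst a"
  by (simp add: mconst_def single_uminus)

lemma mconst_power: "mconst (a ^ k) = mconst a ^ k"
  by (induction k) (simp_all add: mconst_mult)

lemma mconst_of_nat: "mconst (of_nat k) = of_nat k"
  by (simp add: mconst_def)

lemma mconst_sum: "mconst (\<Sum>x\<in>A. f x) = (\<Sum>x\<in>A. mconst (f x))"
  by (induction A rule: infinite_finite_induct) (simp_all add: mconst_add)

lemma poly_mapping_sum_single:
  "(p :: 'b \<Rightarrow>\<^sub>0 'c::comm_monoid_add) = (\<Sum>m\<in>Poly_Mapping.keys p. Poly_Mapping.single m (Poly_Mapping.lookup p m))"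
  by (rule poly_mapping_eqI) (simp add: lookup_sum lookup_single when_def in_keys_iff)

lemma mvar_power: "mvar l ^ k = (Poly_Mapping.single (Poly_Mapping.single l k) 1 :: 'a::comm_ring_1 mpoly)"
  by (induction k) (simp_all add: mvar_def mult_single single_add[symmetric] add.commute)

definition msubst_monom :: "(nat \<Rightarrow> 'a::comm_ring_1 mpoly) \<Rightarrow> (nat \<Rightarrow>\<^sub>0 nat) \<Rightarrow> 'a mpoly" where
  "msubst_monom s m = (\<Prod>l\<in>Poly_Mapping.keys m. s l ^ Poly_Mapping.lookup m l)"

lemma msubst_monom_superset:
  "finite L \<Longrightarrow> Poly_Mapping.keys m \<subseteq> L \<Longrightarrow> msubst_monom s m = (\<Prod>l\<in>L. s l ^ Poly_Mapping.lookup m l)"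
  unfolding msubst_monom_def by (rule prod.mono_neutral_left) (auto simp: in_keys_iff)

lemma msubst_monom_add: "msubst_monom s (m + m') = msubst_monom s m * msubst_monom s m'"
proof -
  let ?L = "Poly_Mapping.keys m \<union> Poly_Mapping.keys m'"
  have "msubst_monom s (m + m') = (\<Prod>l\<in>?L. s l ^ Poly_Mapping.lookup (m + m') l)"
    by (rule msubst_monom_superset) (auto simp: keys_add)
  also have "\<dots> = (\<Prod>l\<in>?L. s l ^ Poly_Mapping.lookup m l * s l ^ Poly_Mapping.lookup m' l)"
    by (simp add: lookup_add power_add)
  also have "\<dots> = msubst_monom s m * msubst_monom s m'"
    by (simp add: prod.distrib msubst_monom_superset[of ?L])
  finally show ?thesis .
qed

lemma msubst_monom_mvar: "msubst_monom mvar m = (Poly_Mapping.single m 1 :: 'a::comm_ring_1 mpoly)"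
proof -
  have "msubst_monom mvar m =
      (\<Prod>l\<in>Poly_Mapping.keys m. (Poly_Mapping.single (Poly_Mapping.single l (Poly_Mapping.lookup m l)) 1 :: 'a mpoly))"
    by (simp only: msubst_monom_def mvar_power)
  also have "\<dots> = Poly_Mapping.single (\<Sum>l\<in>Poly_Mapping.keys m. Poly_Mapping.single l (Poly_Mapping.lookup m l)) 1"
    by (induction rule: infinite_finite_induct) (simp_all add: mult_single)
  also have "\<dots> = Poly_Mapping.single m 1"
    by (simp only: poly_mapping_sum_single[symmetric])
  finally show ?thesis .
qed

lemma msubst_altdef: "msubst s p = (\<Sum>m\<in>Poly_Mapping.keys p. mconst (Poly_Mapping.lookup p m) * msubst_monom s m)"
  by (simp add: msubst_def msubst_monom_def)

lemma msubst_superset: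
  "finite K \<Longrightarrow> Poly_Mapping.keys p \<subseteq> K \<Longrightarrow>
    msubst s p = (\<Sum>m\<in>K. mconst (Poly_Mapping.lookup p m) * msubst_monom s m)"
  unfolding msubst_altdef by (rule sum.mono_neutral_left) (auto simp: in_keys_iff)

lemma msubst_0 [simp]: "msubst s 0 = 0"
  by (simp add: msubst_def)

lemma msubst_add: "msubst s (p + q) = msubst s p + msubst s q"
  by (simp add: msubst_superset[of "Poly_Mapping.keys p \<union> Poly_Mapping.keys q"] keys_add lookup_add
      mconst_add distrib_right sum.distrib)

lemma msubst_sum: "msubst s (\<Sum>i\<in>I. f i) = (\<Sum>i\<in>I. msubst s (f i))"
  by (induction I rule: infinite_finite_induct) (simp_all add: msubst_add)

lemma msubst_uminus: "msubst s (- p) = - msubst s p"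
  by (metis add.left_inverse add_eq_0_iff msubst_0 msubst_add)

lemma msubst_diff: "msubst s (p - q) = msubst s p - msubst s q"
  by (simp only: diff_conv_add_uminus msubst_add msubst_uminus)

lemma msubst_single: "msubst s (Poly_Mapping.single m c) = mconst c * msubst_monom s m"
  by (cases "c = 0") (simp_all add: msubst_altdef)

lemma msubst_single_mult:
  "msubst s (Poly_Mapping.single a c * q) = msubst s (Poly_Mapping.single a c) * msubst s q"
proof -
  have "Poly_Mapping.single a c * q =
      (\<Sum>b\<in>Poly_Mapping.keys q. Poly_Mapping.single (a + b) (c * Poly_Mapping.lookup q b))"
    by (subst poly_mapping_sum_single[of q]) (simp only: sum_distrib_left mult_single)
  then have "msubst s (Poly_Mapping.single a c * q) =
      (\<Sum>b\<in>Poly_Mapping.keys q. (mconst c * msubst_monom s a) *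
        (mconst (Poly_Mapping.lookup q b) * msubst_monom s b))"
    by (simp only: msubst_sum msubst_single mconst_mult msubst_monom_add mult_ac)
  also have "\<dots> = msubst s (Poly_Mapping.single a c) * msubst s q"
    by (simp only: msubst_altdef[of s q] sum_distrib_left msubst_single)
  finally show ?thesis .
qed

lemma msubst_mult: "msubst s (p * q) = msubst s p * msubst s q"
proof -
  have "p * q = (\<Sum>a\<in>Poly_Mapping.keys p. Poly_Mapping.single a (Poly_Mapping.lookup p a) * q)"
    by (subst poly_mapping_sum_single[of p]) (simp only: sum_distrib_right)
  then have "msubst s (p * q) =
      (\<Sum>a\<in>Poly_Mapping.keys p. msubst s (Poly_Mapping.single a (Poly_Mapping.lookup p a))) * msubst s q"
    by (simp only: msubst_sum msubst_single_mult sum_distrib_right)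
  then show ?thesis
    by (simp only: msubst_sum[symmetric] poly_mapping_sum_single[of p, symmetric])
qed

lemma msubst_mconst [simp]: "msubst s (mconst c) = mconst c"
  by (simp add: mconst_def msubst_single msubst_monom_def)

lemma msubst_1 [simp]: "msubst s 1 = 1"
  using msubst_mconst[of s 1] by simp

lemma msubst_mvar [simp]: "msubst s (mvar l) = s l"
  by (simp add: mvar_def msubst_single msubst_monom_def)

lemma msubst_power: "msubst s (p ^ k) = msubst s p ^ k"
  by (induction k) (simp_all add: msubst_mult)

lemma msubst_prod: "msubst s (\<Prod>i\<in>I. f i) = (\<Prod>i\<in>I. msubst s (f i))"
  by (induction I rule: infinite_finite_induct) (simp_all add: msubst_mult)

lemma msubst_mvar_id: "msubst mvar p = p"
  by (simp add: msubst_altdef msubst_monom_mvar mconst_def mult_single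
      flip: poly_mapping_sum_single)

lemma msubst_msubst: "msubst s (msubst t p) = msubst (\<lambda>l. msubst s (t l)) p"
  unfolding msubst_def[of t p]
  by (simp only: msubst_sum msubst_mult msubst_mconst msubst_prod msubst_power msubst_def[of _ p])

definition var_free :: "nat \<Rightarrow> 'a::comm_ring_1 mpoly \<Rightarrow> bool" where
  "var_free i p \<longleftrightarrow> (\<forall>s t. msubst (s(i := t)) p = msubst s p)"

lemma var_freeD:
  assumes "var_free i p" and "\<And>l. l \<noteq> i \<Longrightarrow> s l = s' l"
  shows "msubst s p = msubst s' p"
proof -
  have "s' = s(i := s' i)"
    using assms(2) by auto
  then show ?thesis
    using assms(1) unfolding var_free_def by metis
qed

lemma var_free_mconst [simp]: "var_free i (mconst c)"
  by (simp add: var_free_def)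

lemma var_free_1 [simp]: "var_free i 1"
  by (simp add: var_free_def)

lemma var_free_mvar [simp]: "l \<noteq> i \<Longrightarrow> var_free i (mvar l)"
  by (simp add: var_free_def)

lemma var_free_add [simp]: "var_free i p \<Longrightarrow> var_free i q \<Longrightarrow> var_free i (p + q)"
  by (simp add: var_free_def msubst_add)

lemma var_free_mult [simp]: "var_free i p \<Longrightarrow> var_free i q \<Longrightarrow> var_free i (p * q)"
  by (simp add: var_free_def msubst_mult)

lemma var_free_uminus [simp]: "var_free i p \<Longrightarrow> var_free i (- p)"
  by (simp add: var_free_def msubst_uminus)

lemma var_free_diff [simp]: "var_free i p \<Longrightarrow> var_free i q \<Longrightarrow> var_free i (p - q)"
  by (simp only: diff_conv_add_uminus var_free_add var_free_uminus)

lemma var_free_power [simp]: "var_free i p \<Longrightarrow> var_free i (p ^ k)"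
  by (simp add: var_free_def msubst_power)

lemma var_free_sum: "(\<And>x. x \<in> A \<Longrightarrow> var_free i (f x)) \<Longrightarrow> var_free i (\<Sum>x\<in>A. f x)"
  by (simp add: var_free_def msubst_sum)

lemma msubst_var_free:
  assumes "var_free i p" and "\<And>l. l \<noteq> i \<Longrightarrow> s l = mvar l"
  shows "msubst s p = p"
  using var_freeD[OF assms] by (simp add: msubst_mvar_id)

lemma elem_map_comp:
  assumes "var_free i h"
  shows "elem_map i g \<circ> elem_map i h = elem_map i (g + h)"
proof
  fix p
  show "(elem_map i g \<circ> elem_map i h) p = elem_map i (g + h) p"
    unfolding elem_map_def comp_def msubst_msubst
    by (rule arg_cong[where f = "\<lambda>s. msubst s p"])
      (auto simp: msubst_add msubst_var_free[OF assms] add.assoc)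
qed

lemma elem_map_0: "elem_map i 0 = id"
proof -
  have "(\<lambda>l. if l = i then mvar i + 0 else mvar l) = mvar"
    by auto
  then have "elem_map i 0 = msubst mvar"
    unfolding elem_map_def by (rule arg_cong)
  then show ?thesis
    by (simp add: fun_eq_iff msubst_mvar_id)
qed

lemma elem_map_var_free: "var_free i p \<Longrightarrow> elem_map i g p = p"
  by (simp add: elem_map_def msubst_var_free)

lemma elem_map_conj:
  assumes "k \<noteq> i" "var_free i g" "var_free i h" "var_free k h"
  shows "elem_map k h \<circ> elem_map i g \<circ> elem_map k (- h) = elem_map i (elem_map k h g)"
proof
  fix p
  let ?sh = "\<lambda>l. if l = k then mvar k + h else mvar l"
  let ?sg = "\<lambda>l. if l = i then mvar i + g else mvar l"
  have "msubst ?sh (msubst ?sg (if l = k then mvar k + - h else mvar l)) =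
      (if l = i then mvar i + elem_map k h g else mvar l)" for l
  proof (cases "l = k")
    case True
    have "msubst ?sg (mvar k - h) = mvar k - h"
      using assms by (intro msubst_var_free[of i]) auto
    moreover have "msubst ?sh h = h"
      using assms by (intro msubst_var_free[of k]) auto
    ultimately show ?thesis
      using True assms(1) by (simp add: msubst_diff)
  qed (use assms in \<open>auto simp: msubst_add elem_map_def\<close>)
  then show "(elem_map k h \<circ> elem_map i g \<circ> elem_map k (- h)) p = elem_map i (elem_map k h g) p"
    unfolding elem_map_def[of k] elem_map_def[of i] comp_def msubst_msubst by presburger
qed

text \<open>Up to the sign \<open>(-1)\<^sup>d\<close>, the \<open>d\<close>-th finite difference of \<open>x\<^sup>l\<close> at \<open>0\<close>.\<close>

definition fin_diff_power :: "nat \<Rightarrow> nat \<Rightarrow> 'a::comm_ring_1" where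
  "fin_diff_power d l = (\<Sum>x\<le>d. (-1) ^ x * of_nat (d choose x) * of_nat x ^ l)"

lemma fin_diff_power_Suc:
  "fin_diff_power (Suc d) l = fin_diff_power d l - (\<Sum>j\<le>l. of_nat (l choose j) * fin_diff_power d j)"
proof -
  have pascal: "fin_diff_power (Suc d) l = (\<Sum>x\<le>Suc d. (-1) ^ x * of_nat (d choose x) * of_nat x ^ l)
      + (\<Sum>x\<le>d. (-1) ^ Suc x * of_nat (d choose x) * of_nat (Suc x) ^ l)"
    unfolding fin_diff_power_def sum.atMost_Suc_shift[of _ d] sum.distrib[symmetric]
    by (simp add: algebra_simps sum.atMost_Suc_shift sum_subtractf sum_negf)
  have unshifted: "(\<Sum>x\<le>Suc d. (-1) ^ x * of_nat (d choose x) * of_nat x ^ l) = (fin_diff_power d l :: 'a)"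
    by (simp add: fin_diff_power_def binomial_eq_0)
  have "of_nat (Suc x) ^ l = (\<Sum>j\<le>l. of_nat (l choose j) * (of_nat x ^ j :: 'a))" for x
    using binomial_ring[of "of_nat x :: 'a" 1 l] by (simp add: add.commute)
  then have shifted: "(\<Sum>x\<le>d. (-1) ^ Suc x * of_nat (d choose x) * of_nat (Suc x) ^ l) =
      - (\<Sum>j\<le>l. of_nat (l choose j) * (fin_diff_power d j :: 'a))"
    by (simp add: fin_diff_power_def sum_distrib_left sum_distrib_right sum_negf mult_ac
        sum.swap[of _ "{..l}"])
  show ?thesis
    by (simp only: pascal unshifted shifted diff_conv_add_uminus)
qed

lemma fin_diff_power_eq:
  "l \<le> d \<Longrightarrow> fin_diff_power d l = (if l = d then (-1) ^ d * of_nat (fact d) else (0::'a::comm_ring_1))"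
proof (induction d arbitrary: l)
  case 0
  then show ?case
    by (simp add: fin_diff_power_def)
next
  case (Suc d)
  show ?case
  proof (cases "l \<le> d")
    case True
    have "(\<Sum>j\<le>l. of_nat (l choose j) * fin_diff_power d j) =
        (\<Sum>j\<le>l. if j = d then of_nat (l choose j) * ((-1) ^ d * of_nat (fact d)) else (0::'a))"
      using True Suc.IH by (intro sum.cong) auto
    then show ?thesis
      using True Suc.IH[OF True] by (auto simp: fin_diff_power_Suc)
  next
    case False
    then have l: "l = Suc d"
      using Suc.prems by simp
    have "(\<Sum>j\<le>d. of_nat (Suc d choose j) * fin_diff_power d j) =
        (\<Sum>j\<le>d. if j = d then of_nat (Suc d) * ((-1) ^ d * of_nat (fact d)) else (0::'a))"
      using Suc.IH by (intro sum.cong) auto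
    then show ?thesis
      using Suc.IH[of d] by (simp add: l fin_diff_power_Suc algebra_simps)
  qed
qed

definition elem_maps_in :: "('a::comm_ring_1 mpoly \<Rightarrow> 'a mpoly) set \<Rightarrow> nat \<Rightarrow> 'a mpoly \<Rightarrow> bool" where
  "elem_maps_in G i f \<longleftrightarrow> (\<forall>r. elem_map i (mconst r * f) \<in> G)"

lemma of_nat_dvd_one_if_dvd: "m dvd n \<Longrightarrow> of_nat n dvd (1::'a::comm_semiring_1) \<Longrightarrow> of_nat m dvd (1::'a)"
  by (metis dvd_mult_left dvdE of_nat_mult)

lemma elem_maps_in_mconst_mult: "elem_maps_in G i f \<Longrightarrow> elem_maps_in G i (mconst c * f)"
  unfolding elem_maps_in_def by (metis mconst_mult mult.assoc)

locale map_monoid =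
  fixes G :: "('a::comm_ring_1 mpoly \<Rightarrow> 'a mpoly) set"
  assumes id_mem: "id \<in> G"
    and comp_mem: "f \<in> G \<Longrightarrow> g \<in> G \<Longrightarrow> f \<circ> g \<in> G"
begin

lemma elem_map_sum_mem:
  assumes "finite A" "\<And>x. x \<in> A \<Longrightarrow> var_free i (g x)" "\<And>x. x \<in> A \<Longrightarrow> elem_map i (g x) \<in> G"
  shows "elem_map i (\<Sum>x\<in>A. g x) \<in> G"
  using assms
proof (induction A rule: finite_induct)
  case empty
  show ?case
    by (simp only: sum.empty elem_map_0 id_mem)
next
  case (insert x F)
  then have "elem_map i (\<Sum>x\<in>insert x F. g x) = elem_map i (g x) \<circ> elem_map i (\<Sum>x\<in>F. g x)"
    by (simp add: elem_map_comp var_free_sum)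
  also have "\<dots> \<in> G"
    using insert by (simp add: comp_mem)
  finally show ?case .
qed

lemma elem_maps_in_add:
  assumes "elem_maps_in G i f" "elem_maps_in G i g" "var_free i g"
  shows "elem_maps_in G i (f + g)"
  unfolding elem_maps_in_def
proof
  fix r
  have "elem_map i (mconst r * (f + g)) = elem_map i (mconst r * f) \<circ> elem_map i (mconst r * g)"
    using assms(3) by (simp add: elem_map_comp distrib_left)
  also have "\<dots> \<in> G"
    using assms(1,2) by (simp add: elem_maps_in_def comp_mem)
  finally show "elem_map i (mconst r * (f + g)) \<in> G" .
qed

text \<open>The alternating combination of the maps at \<open>s = 0, \<dots>, d\<close> with weights
  \<open>(-1)\<^sup>x (d choose x)\<close> isolates \<open>(-1)\<^sup>d d! a\<^sub>d\<close>.\<close>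

lemma elem_maps_in_top_coeff:
  assumes unit: "of_nat (fact d) dvd (1::'a)"
    and free: "\<And>l. l \<le> d \<Longrightarrow> var_free i (a l)"
    and mem: "\<And>s. elem_maps_in G i (\<Sum>l\<le>d. mconst s ^ l * a l)"
  shows "elem_maps_in G i (a d)"
  unfolding elem_maps_in_def
proof
  fix r
  obtain u :: 'a where u: "u * of_nat (fact d) = 1"
    using unit by (metis dvdE mult.commute)
  define c where "c x = r * u * (-1) ^ d * ((-1) ^ x * of_nat (d choose x))" for x
  let ?q = "\<lambda>x. mconst (c x) * (\<Sum>l\<le>d. mconst (of_nat x) ^ l * a l)"
  have coeff: "(\<Sum>x\<le>d. c x * of_nat x ^ l) = (if l = d then r else 0)" if "l \<le> d" for l
  proof -
    have "(\<Sum>x\<le>d. c x * of_nat x ^ l) = r * u * (-1) ^ d * fin_diff_power d l"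
      by (simp add: c_def fin_diff_power_def sum_distrib_left mult_ac)
    then show ?thesis
      using that u by (simp add: fin_diff_power_eq algebra_simps flip: power_add)
  qed
  have "(\<Sum>x\<le>d. ?q x) = (\<Sum>x\<le>d. \<Sum>l\<le>d. mconst (c x * of_nat x ^ l) * a l)"
    by (simp only: sum_distrib_left mconst_mult mconst_power mult.assoc)
  also have "\<dots> = (\<Sum>l\<le>d. mconst (\<Sum>x\<le>d. c x * of_nat x ^ l) * a l)"
    by (subst sum.swap) (simp only: mconst_sum sum_distrib_right)
  also have "\<dots> = (\<Sum>l\<le>d. if l = d then mconst r * a d else 0)"
    by (intro sum.cong) (simp_all add: coeff)
  also have "\<dots> = mconst r * a d"
    by simp
  finally have "(\<Sum>x\<le>d. ?q x) = mconst r * a d" .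
  moreover have "elem_map i (\<Sum>x\<le>d. ?q x) \<in> G"
    using mem free by (intro elem_map_sum_mem) (auto simp: elem_maps_in_def intro!: var_free_mult var_free_sum)
  ultimately show "elem_map i (mconst r * a d) \<in> G"
    by simp
qed

lemma elem_maps_in_coeff:
  assumes "of_nat (fact d) dvd (1::'a)"
    and "\<And>l. l \<le> d \<Longrightarrow> var_free i (a l)"
    and "\<And>s. elem_maps_in G i (\<Sum>l\<le>d. mconst s ^ l * a l)"
    and "l \<le> d"
  shows "elem_maps_in G i (a l)"
  using assms
proof (induction d arbitrary: l)
  case 0
  then show ?case
    using "0.prems"(3)[of 0] by simp
next
  case (Suc d)
  have top: "elem_maps_in G i (a (Suc d))"
    using Suc.prems(1-3) by (rule elem_maps_in_top_coeff)
  show ?case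
  proof (cases "l = Suc d")
    case False
    show ?thesis
    proof (rule Suc.IH)
      show "of_nat (fact d) dvd (1::'a)"
        using Suc.prems(1) by (rule of_nat_dvd_one_if_dvd[rotated]) (simp add: fact_dvd)
      show "var_free i (a l)" if "l \<le> d" for l
        using Suc.prems(2) that by simp
      show "l \<le> d"
        using Suc.prems(4) False by simp
      fix s
      have "elem_maps_in G i ((\<Sum>l\<le>Suc d. mconst s ^ l * a l) + mconst (- (s ^ Suc d)) * a (Suc d))"
        using Suc.prems(2,3) top by (intro elem_maps_in_add elem_maps_in_mconst_mult var_free_mult) simp_all
      then show "elem_maps_in G i (\<Sum>l\<le>d. mconst s ^ l * a l)"
        by (simp add: mconst_uminus mconst_power mconst_mult)
    qed
  qed (use top in simp)
qed

lemma elem_maps_in_conj: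
  assumes "k \<noteq> i" "var_free i Z" "var_free k Z" "var_free i Y" "var_free k Y"
    and "elem_maps_in G i (Z * mvar k ^ d)" "elem_maps_in G k Y"
  shows "elem_maps_in G i (Z * (mconst s * Y + mvar k) ^ d)"
  unfolding elem_maps_in_def
proof
  fix r
  let ?h = "mconst s * Y"
  have "elem_map k ?h \<circ> elem_map i (mconst r * (Z * mvar k ^ d)) \<circ> elem_map k (- ?h) =
      elem_map i (elem_map k ?h (mconst r * (Z * mvar k ^ d)))"
    using assms by (intro elem_map_conj) auto
  also have "elem_map k ?h (mconst r * (Z * mvar k ^ d)) = mconst r * (Z * (?h + mvar k) ^ d)"
    using elem_map_var_free[OF assms(3)]
    by (simp add: elem_map_def msubst_mult msubst_power add.commute)
  finally have conj: "elem_map k ?h \<circ> elem_map i (mconst r * (Z * mvar k ^ d)) \<circ> elem_map k (- ?h) =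
      elem_map i (mconst r * (Z * (?h + mvar k) ^ d))" .
  have "elem_map k (- ?h) = elem_map k (mconst (- s) * Y)"
    by (simp add: mconst_uminus)
  then have "elem_map k ?h \<circ> elem_map i (mconst r * (Z * mvar k ^ d)) \<circ> elem_map k (- ?h) \<in> G"
    using assms(6,7) by (simp add: elem_maps_in_def comp_mem)
  then show "elem_map i (mconst r * (Z * (?h + mvar k) ^ d)) \<in> G"
    by (simp only: conj)
qed

lemma elem_maps_in_binomial_coeff:
  assumes ki: "k \<noteq> i"
    and Z: "var_free i Z" "var_free k Z" and Y: "var_free i Y" "var_free k Y"
    and unit: "of_nat (fact d) dvd (1::'a)"
    and gi: "elem_maps_in G i (Z * mvar k ^ d)" and gk: "elem_maps_in G k Y"
    and l: "l \<le> d"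
  shows "elem_maps_in G i (Z * Y ^ l * mvar k ^ (d - l))"
proof -
  define a where "a l = of_nat (d choose l) * (Z * Y ^ l * mvar k ^ (d - l))" for l
  have free: "var_free i (a l)" for l
    using ki Z Y by (simp add: a_def mconst_of_nat[symmetric])
  have mem: "elem_maps_in G i (\<Sum>l\<le>d. mconst s ^ l * a l)" for s
  proof -
    have "Z * (mconst s * Y + mvar k) ^ d = (\<Sum>l\<le>d. mconst s ^ l * a l)"
      by (simp add: binomial_ring a_def sum_distrib_left power_mult_distrib mult_ac)
    then show ?thesis
      using elem_maps_in_conj[OF ki Z Y gi gk, of s] by simp
  qed
  have "elem_maps_in G i (a l)"
    using elem_maps_in_coeff[OF unit free mem l] .
  moreover obtain v :: 'a where v: "of_nat (d choose l) * v = 1"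
  proof -
    have "d choose l dvd fact d"
      by (metis binomial_fact_lemma[OF l] dvd_triv_right)
    with unit show ?thesis
      using that by (metis dvdE of_nat_dvd_one_if_dvd)
  qed
  moreover have "mconst v * a l = mconst (of_nat (d choose l) * v) * (Z * Y ^ l * mvar k ^ (d - l))"
    by (simp add: a_def mconst_mult mconst_of_nat mult_ac)
  ultimately show ?thesis
    using elem_maps_in_mconst_mult[of G i "a l" v] v by simp
qed

lemma elem_maps_in_trans:
  assumes "k \<noteq> i" "j \<noteq> i" "j \<noteq> k" "var_free i Z" "var_free k Z"
    and unit: "of_nat (fact d) dvd (1::'a)" and "1 \<le> d"
    and "elem_maps_in G i (Z * mvar k ^ d)"
    and "elem_maps_in G k (mvar j ^ W)" "elem_maps_in G k (mvar j ^ W0)"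
  shows "elem_maps_in G i (Z * mvar j ^ (W + W0 * (d - 1)))"
proof -
  have "elem_maps_in G i (Z * (mvar j ^ W) ^ 1 * mvar k ^ (d - 1))"
    using assms by (intro elem_maps_in_binomial_coeff) auto
  then have "elem_maps_in G i ((Z * mvar j ^ W) * mvar k ^ (d - 1))"
    by simp
  moreover have "of_nat (fact (d - 1)) dvd (1::'a)"
    using unit by (rule of_nat_dvd_one_if_dvd[rotated]) (simp add: fact_dvd)
  ultimately have "elem_maps_in G i ((Z * mvar j ^ W) * (mvar j ^ W0) ^ (d - 1) * mvar k ^ (d - 1 - (d - 1)))"
    using assms by (intro elem_maps_in_binomial_coeff) auto
  then show ?thesis
    by (simp add: power_add power_mult mult.assoc)
qed

lemma elem_maps_in_round_trip:
  assumes "j \<noteq> i" "k \<noteq> i" "k \<noteq> j"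
    and "of_nat (fact a) dvd (1::'a)" "of_nat (fact b) dvd (1::'a)" "1 \<le> a" "1 \<le> b"
    and "elem_maps_in G i (mvar j ^ a)" "elem_maps_in G j (mvar k ^ b)"
    and "elem_maps_in G k (mvar j ^ W)" "elem_maps_in G k (mvar j ^ W0)"
  shows "elem_maps_in G i (mvar j ^ (a - 1 + (W + W0 * (b - 1))))"
proof -
  have "elem_maps_in G i (1 * (mvar k ^ b) ^ 1 * mvar j ^ (a - 1))"
    using assms by (intro elem_maps_in_binomial_coeff) auto
  then have "elem_maps_in G i (mvar j ^ (a - 1) * mvar k ^ b)"
    by (simp add: mult.commute)
  then have "elem_maps_in G i (mvar j ^ (a - 1) * mvar j ^ (W + W0 * (b - 1)))"
    using assms by (intro elem_maps_in_trans) auto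
  then show ?thesis
    by (simp add: power_add)
qed

lemma elem_map_poly_mem:
  assumes "j \<noteq> i" and mem: "\<And>k. elem_maps_in G i (mvar j ^ (t + k * D))"
  shows "elem_map i (mvar j ^ t * poly (map_poly mconst P) (mvar j ^ D)) \<in> G"
proof -
  let ?D = "degree (map_poly mconst P)"
  have "poly (map_poly mconst P) (mvar j ^ D) = (\<Sum>k\<le>?D. coeff (map_poly mconst P) k * (mvar j ^ D) ^ k)"
    by (rule poly_altdef)
  also have "\<dots> = (\<Sum>k\<le>?D. mconst (coeff P k) * mvar j ^ (k * D))"
    by (simp add: coeff_map_poly mult.commute[of _ D] flip: power_mult)
  finally have "mvar j ^ t * poly (map_poly mconst P) (mvar j ^ D) =
      (\<Sum>k\<le>?D. mconst (coeff P k) * mvar j ^ (t + k * D))"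
    by (simp add: sum_distrib_left power_add mult_ac)
  moreover have "elem_map i (\<Sum>k\<le>?D. mconst (coeff P k) * mvar j ^ (t + k * D)) \<in> G"
    using assms by (intro elem_map_sum_mem) (auto simp: elem_maps_in_def)
  ultimately show ?thesis
    by simp
qed

end

lemma cyc_succ_mem: "i \<in> {1..n} \<Longrightarrow> cyc_succ n i \<in> {1..n}"
  by (auto simp: cyc_succ_def)

lemma cyc_succ_neq: "2 \<le> n \<Longrightarrow> i \<in> {1..n} \<Longrightarrow> cyc_succ n i \<noteq> i"
  by (auto simp: cyc_succ_def)

lemma cyc_add_0: "i \<in> {1..n} \<Longrightarrow> cyc_add n i 0 = i"
  by (auto simp: cyc_add_def)

lemma cyc_add_cyc_succ: "i \<in> {1..n} \<Longrightarrow> cyc_add n (cyc_succ n i) k = cyc_add n i (Suc k)"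
  by (cases "i = n") (auto simp: cyc_add_def cyc_succ_def)

lemma bij_betw_cyc_add:
  assumes "i \<in> {1..n}"
  shows "bij_betw (cyc_add n i) {..<n} {1..n}"
proof -
  have inj: "inj_on (cyc_add n i) {..<n}"
  proof (rule inj_onI)
    fix x y
    assume "x \<in> {..<n}" "y \<in> {..<n}" "cyc_add n i x = cyc_add n i y"
    moreover from this obtain q1 q2 where "i - 1 + x + n * q1 = i - 1 + y + n * q2"
      by (auto simp: cyc_add_def nat_mod_eq_iff)
    then have "x mod n = y mod n"
      by (auto simp: nat_mod_eq_iff)
    ultimately show "x = y"
      by simp
  qed
  moreover have "cyc_add n i ` {..<n} \<subseteq> {1..n}"
    using assms by (auto simp: cyc_add_def Suc_leI)
  ultimately have "cyc_add n i ` {..<n} = {1..n}"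
    by (intro card_subset_eq) (simp_all add: card_image)
  with inj show ?thesis
    by (simp add: bij_betw_def)
qed

text \<open>The cyclic distance from \<open>i\<close> to \<open>j\<close>, the number of factors of \<open>t_prod n e i j\<close>.\<close>

lemma cyc_dist_eq:
  fixes i j n :: nat
  assumes "i \<in> {1..n}" "j \<in> {1..n}"
  shows "(j + n - i) mod n = (if i \<le> j then j - i else j + n - i)"
proof (cases "i \<le> j")
  case True
  then have "j + n - i = (j - i) + n" "j - i < n"
    using assms by auto
  then show ?thesis
    using True by (metis mod_add_self2 mod_less)
qed (use assms in auto)

lemma cyc_dist_eq_0_iff:
  fixes i j n :: nat
  shows "i \<in> {1..n} \<Longrightarrow> j \<in> {1..n} \<Longrightarrow> (j + n - i) mod n = 0 \<longleftrightarrow> j = i"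
  by (auto simp: cyc_dist_eq)

lemma cyc_dist_cyc_succ:
  "i \<in> {1..n} \<Longrightarrow> j \<in> {1..n} \<Longrightarrow> j \<noteq> i \<Longrightarrow>
    (j + n - i) mod n = Suc ((j + n - cyc_succ n i) mod n)"
  using cyc_succ_mem[of i n] by (auto simp: cyc_dist_eq cyc_succ_def)

lemma t_prod_cyc_succ: "2 \<le> n \<Longrightarrow> i \<in> {1..n} \<Longrightarrow> t_prod n e i (cyc_succ n i) = e i"
  using cyc_dist_cyc_succ[of i n "cyc_succ n i"] cyc_succ_mem[of i n] cyc_succ_neq[of n i]
  by (simp add: t_prod_def cyc_dist_eq_0_iff cyc_add_0)

lemma t_prod_eq_mult:
  assumes "i \<in> {1..n}" "j \<in> {1..n}" "j \<noteq> i"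
  shows "t_prod n e i j = e i * t_prod n e (cyc_succ n i) j"
  unfolding t_prod_def cyc_dist_cyc_succ[OF assms] prod.lessThan_Suc_shift
  using assms by (simp add: cyc_add_0 cyc_add_cyc_succ)

lemma e_mult_t_prod_cyc_succ_self:
  assumes "2 \<le> n" "j \<in> {1..n}"
  shows "e j * t_prod n e (cyc_succ n j) j = (\<Prod>k\<in>{1..n}. e k)"
proof -
  obtain m where m: "n = Suc m"
    using assms(1) by (cases n) auto
  have "(j + n - cyc_succ n j) mod n = m"
    using assms cyc_dist_eq[OF cyc_succ_mem[OF assms(2)] assms(2)] by (auto simp: m cyc_succ_def)
  then have "e j * t_prod n e (cyc_succ n j) j = (\<Prod>k<n. e (cyc_add n j k))"
    using assms(2) unfolding m prod.lessThan_Suc_shift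
    by (simp add: t_prod_def cyc_add_0 cyc_add_cyc_succ)
  also have "\<dots> = (\<Prod>k\<in>{1..n}. e k)"
    using assms prod.reindex_bij_betw[OF bij_betw_cyc_add[OF assms(2)], of e] by simp
  finally show ?thesis .
qed

lemma cyc_pair_induct [consumes 4, case_names cyc_succ step]:
  assumes "2 \<le> n" "i \<in> {1..n}" "j \<in> {1..n}" "j \<noteq> i"
    and cyc_succ: "\<And>i. i \<in> {1..n} \<Longrightarrow> P i (cyc_succ n i)"
    and step: "\<And>i j. i \<in> {1..n} \<Longrightarrow> j \<in> {1..n} \<Longrightarrow> j \<noteq> i \<Longrightarrow> j \<noteq> cyc_succ n i \<Longrightarrow>
        P (cyc_succ n i) j \<Longrightarrow> P i j"
  shows "P i j"
proof -
  have "P i j" if "i \<in> {1..n}" "j \<in> {1..n}" "j \<noteq> i" "(j + n - i) mod n = d" for d i j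
    using that
  proof (induction d arbitrary: i)
    case 0
    then show ?case
      by (simp add: cyc_dist_eq_0_iff)
  next
    case (Suc d)
    show ?case
    proof (cases "j = cyc_succ n i")
      case True
      then show ?thesis
        using Suc.prems cyc_succ by simp
    next
      case False
      with Suc.prems have "P (cyc_succ n i) j"
        using cyc_dist_cyc_succ[of i n j] cyc_succ_mem[of i n] by (intro Suc.IH) auto
      then show ?thesis
        using Suc.prems False step by blast
    qed
  qed
  then show ?thesis
    using assms(2-4) by blast
qed

lemma Ggrp_comp_mem: "f \<in> Ggrp n e \<Longrightarrow> g \<in> Ggrp n e \<Longrightarrow> f \<circ> g \<in> Ggrp n e"
  by (induction f rule: Ggrp.induct) (auto simp: comp_assoc intro: Ggrp.Ggrp_step)

interpretation Ggrp: map_monoid "Ggrp n e"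
  by unfold_locales (auto intro: Ggrp.Ggrp_id Ggrp_comp_mem)

lemma elem_maps_in_Ggrp_generator:
  "i \<in> {1..n} \<Longrightarrow> elem_maps_in (Ggrp n e) i (mvar (cyc_succ n i) ^ e i)"
  using Ggrp.Ggrp_step[OF Ggrp.Ggrp_id, of i n e] by (auto simp: elem_maps_in_def alpha_def)

context
  fixes n :: nat and e :: "nat \<Rightarrow> nat"
  assumes n_ge_3: "3 \<le> n"
    and e_pos: "\<And>k. k \<in> {1..n} \<Longrightarrow> 1 \<le> e k"
    and unit: "of_nat (fact (Max (e ` {1..n}))) dvd (1::'a::comm_ring_1)"
begin

lemma two_le_n: "2 \<le> n"
  using n_ge_3 by simp

lemma fact_e_dvd_one: "k \<in> {1..n} \<Longrightarrow> of_nat (fact (e k)) dvd (1::'a)"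
  by (rule of_nat_dvd_one_if_dvd[OF _ unit]) (simp add: fact_dvd)

lemma elem_maps_in_t_prod_step:
  assumes "i \<in> {1..n}" "j \<in> {1..n}" "j \<noteq> i" "j \<noteq> cyc_succ n i"
    and "elem_maps_in (Ggrp n e) (cyc_succ n i) (mvar j ^ (t_prod n e (cyc_succ n i) j + c) :: 'a mpoly)"
    and "elem_maps_in (Ggrp n e) (cyc_succ n i) (mvar j ^ t_prod n e (cyc_succ n i) j :: 'a mpoly)"
  shows "elem_maps_in (Ggrp n e) i (mvar j ^ (t_prod n e i j + c) :: 'a mpoly)"
proof -
  let ?W = "t_prod n e (cyc_succ n i) j"
  have mem: "elem_maps_in (Ggrp n e) i (1 * mvar j ^ ((?W + c) + ?W * (e i - 1)) :: 'a mpoly)"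
    using assms two_le_n e_pos[OF assms(1)] elem_maps_in_Ggrp_generator[OF assms(1)]
    by (intro Ggrp.elem_maps_in_trans[where k = "cyc_succ n i" and d = "e i"])
      (auto simp: cyc_succ_neq cyc_succ_mem fact_e_dvd_one)
  have "(?W + c) + ?W * (e i - 1) = t_prod n e i j + c"
    using t_prod_eq_mult[OF assms(1-3), of e] e_pos[OF assms(1)] by (cases "e i") auto
  with mem show ?thesis
    by (simp only: mult_1_left)
qed

lemma elem_maps_in_t_prod_0:
  assumes "i \<in> {1..n}" "j \<in> {1..n}" "j \<noteq> i"
  shows "elem_maps_in (Ggrp n e) i (mvar j ^ t_prod n e i j :: 'a mpoly)"
  using two_le_n assms
proof (induction i j rule: cyc_pair_induct)
  case (cyc_succ i)
  then show ?case
    using elem_maps_in_Ggrp_generator[of i n e] two_le_n by (simp add: t_prod_cyc_succ)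
next
  case (step i j)
  then show ?case
    using elem_maps_in_t_prod_step[of i j 0] by simp
qed

text \<open>Going once around the cycle from \<open>j = i + 1\<close> back to \<open>j\<close> raises the exponent by \<open>E - 1\<close>.\<close>

lemma elem_maps_in_t_prod_wrap:
  assumes "i \<in> {1..n}" "j = cyc_succ n i" "k = cyc_succ n j"
    and "elem_maps_in (Ggrp n e) k (mvar j ^ (t_prod n e k j + c) :: 'a mpoly)"
  shows "elem_maps_in (Ggrp n e) i (mvar j ^ (t_prod n e i j + ((\<Prod>k\<in>{1..n}. e k) - 1) + c) :: 'a mpoly)"
proof -
  let ?E = "\<Prod>k\<in>{1..n}. e k"
  let ?W = "t_prod n e k j"
  have ij: "j \<in> {1..n}" "j \<noteq> i" "k \<in> {1..n}" "k \<noteq> j" "k \<noteq> i"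
    using assms(1-3) n_ge_3 by (auto simp: cyc_succ_def)
  have mem: "elem_maps_in (Ggrp n e) i (mvar j ^ (e i - 1 + ((?W + c) + ?W * (e j - 1))) :: 'a mpoly)"
    using ij assms e_pos elem_maps_in_Ggrp_generator[of i n e] elem_maps_in_Ggrp_generator[of j n e]
      elem_maps_in_t_prod_0[of k j]
    by (intro Ggrp.elem_maps_in_round_trip) (auto simp: fact_e_dvd_one)
  have "?W + ?W * (e j - 1) = ?E"
    using e_mult_t_prod_cyc_succ_self[OF two_le_n ij(1), of e] e_pos[OF ij(1)] assms(3)
    by (cases "e j") (auto simp: mult.commute)
  moreover have "1 \<le> e i"
    using assms(1) e_pos by simp
  moreover have "1 \<le> ?E"
    using e_pos by (rule prod_ge_1)
  moreover have "t_prod n e i j = e i"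
    using t_prod_cyc_succ[OF two_le_n assms(1), of e] assms(2) by simp
  ultimately have "e i - 1 + ((?W + c) + ?W * (e j - 1)) = t_prod n e i j + (?E - 1) + c"
    by linarith
  with mem show ?thesis
    by (simp only:)
qed

lemma elem_maps_in_t_prod:
  assumes "i \<in> {1..n}" "j \<in> {1..n}" "j \<noteq> i"
  shows "elem_maps_in (Ggrp n e) i (mvar j ^ (t_prod n e i j + m * ((\<Prod>k\<in>{1..n}. e k) - 1)) :: 'a mpoly)"
  using assms
proof (induction m arbitrary: i j)
  case 0
  then show ?case
    by (simp add: elem_maps_in_t_prod_0)
next
  case (Suc m)
  let ?E = "\<Prod>k\<in>{1..n}. e k"
  from two_le_n Suc.prems show ?case
  proof (induction i j rule: cyc_pair_induct)
    case (cyc_succ i)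
    let ?j = "cyc_succ n i"
    let ?k = "cyc_succ n (cyc_succ n i)"
    have "?k \<in> {1..n}" "?j \<in> {1..n}" "?j \<noteq> ?k"
      using cyc_succ two_le_n by (auto simp: cyc_succ_def)
    then have "elem_maps_in (Ggrp n e) ?k (mvar ?j ^ (t_prod n e ?k ?j + m * (?E - 1)) :: 'a mpoly)"
      by (rule Suc.IH)
    then have "elem_maps_in (Ggrp n e) i (mvar ?j ^ (t_prod n e i ?j + (?E - 1) + m * (?E - 1)) :: 'a mpoly)"
      by (rule elem_maps_in_t_prod_wrap[OF cyc_succ refl refl])
    then show ?case
      by (simp add: add.assoc)
  next
    case (step i j)
    show ?case
      using step(1-5) elem_maps_in_t_prod_0[OF cyc_succ_mem[OF step(1)] step(2,4)]
      by (rule elem_maps_in_t_prod_step)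
  qed
qed

end

theorem mainTheorem9:
  fixes n :: nat and e :: "nat \<Rightarrow> nat"
  assumes "n \<ge> 3"
    and "\<forall>k\<in>{1..n}. e k \<ge> 1"
    and "(\<Prod>k\<in>{1..n}. e k) \<ge> 2"
    and "\<exists>u::'a::comm_ring_1. of_nat (fact (Max (e ` {1..n}))) * u = 1"
  shows "(\<forall>i\<in>{1..n}. \<forall>j\<in>{1..n}. i \<noteq> j \<longrightarrow> (\<forall>(m::nat) (r::'a).
            alpha i j (t_prod n e i j + m * ((\<Prod>k\<in>{1..n}. e k) - 1)) r \<in> Ggrp n e))
       \<and> (\<forall>i\<in>{1..n}. \<forall>j\<in>{1..n}. i \<noteq> j \<longrightarrow> (\<forall>P :: 'a poly.
            elem_map i (mvar j ^ t_prod n e i j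
                        * poly (map_poly mconst P) (mvar j ^ ((\<Prod>k\<in>{1..n}. e k) - 1)))
            \<in> Ggrp n e))"
proof -
  have "of_nat (fact (Max (e ` {1..n}))) dvd (1::'a)"
    using assms(4) unfolding dvd_def by metis
  then have mem: "elem_maps_in (Ggrp n e) i
      (mvar j ^ (t_prod n e i j + m * ((\<Prod>k\<in>{1..n}. e k) - 1)) :: 'a mpoly)"
    if "i \<in> {1..n}" "j \<in> {1..n}" "i \<noteq> j" for i j m
    using elem_maps_in_t_prod[of n e i j m] assms(1,2) that by auto
  show ?thesis
    using mem by (auto simp: alpha_def elem_maps_in_def intro: Ggrp.elem_map_poly_mem)
qed

end
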